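(* For every $\epsilon>0$, every $\delta>0$, and all integers $n\ge 2$ and $t$ with $1\le t\le \delta n$, there is an instance of $\mathrm{Knapsack}$ with $n$ objects (namely the uniform instance $c_i=v_i=1$ for all $i$, with a suitable capacity $C\in[1,2)$) such that $$\max\Big\{\sum_{i\in V} v_i\, y_{\{i\}} \;:\; y\in \mathrm{SA}^t(K)\Big\}\;\ge\; \frac{2-\epsilon}{1+\delta}\cdot \mathrm{OPT},$$ where $K$ is the LP relaxation of the instance and $\mathrm{OPT}$ its optimal integral value. That is, the integrality gap of the $t$-th level of the Sherali-Adams hierarchy for $\mathrm{Knapsack}$ is at least $(2-\epsilon)/(1+\delta)$ whenever $t\le\delta n$.
   Context: A $\mathrm{Knapsack}$ instance consists of objects $V=[n]$ with sizes $c_i\ge 0$, values $v_i\ge 0$ and a capacity $C$ with $c_i\le C$ for all $i$; $\mathrm{OPT}$ is the maximum of $\sum_{i\in X}v_i$ over $X\subseteq V$ with $\sum_{i\in X}c_i\le C$. Its LP relaxation is $K=\{x\in[0,1]^n: g(x)\ge 0\}$ with the single constraint $g(x)=C-\sum_{i\in V}c_ix_i$. Notation: $\mathcal P(U)$ is the power set of $U$ and $\mathcal P_t(U)$ the set of subsets of $U$ of size at most $t$. For a collection $\mathcal T$ of subsets of $V$ and a vector $y$ indexed by subsets of $V$, $M_{\mathcal T}(y)$ is the symmetric matrix with rows and columns indexed by $\mathcal T$ and $(I,J)$-entry $y_{I\cup J}$. For an affine function $g(x)=b+\sum_{j\in V}a_jx_j$, $g*y$ is the vector with $(g*y)_I=b\,y_I+\sum_{j\in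 V}a_j\,y_{I\cup\{j\}}$. The $t$-th Sherali-Adams lifted polytope of $K=\{x\in[0,1]^n: g_\ell(x)\ge0,\ \ell=1,\dots,m\}$ (with affine $g_\ell$) is $\mathrm{SA}^t(K)$, the set of $y\in[0,1]^{\mathcal P_t(V)}$ with $y_\emptyset=1$, $M_{\mathcal P(U)}(y)\succeq 0$ for every $U\subseteq V$ with $|U|\le t$, and $M_{\mathcal P(W)}(g_\ell*y)\succeq0$ for every $\ell$ and every $W\subseteq V$ with $|W|\le t-1$. *)

theory Defs
  imports Complex_Main
begin

definition objs :: "nat \<Rightarrow> nat set" where
  "objs n = {1..n}"

definition subsets_upto :: "nat \<Rightarrow> nat set \<Rightarrow> nat set set" where
  "subsets_upto t U = {I. I \<subseteq> U \<and> card I \<le> t}"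

text \<open>M_T(y) is positive semidefinite: the symmetric matrix with (I,J)-entry y(I Un J)
  satisfies x^T M x >= 0 for all real vectors x indexed by T (T finite).\<close>
definition moment_psd :: "nat set set \<Rightarrow> (nat set \<Rightarrow> real) \<Rightarrow> bool" where
  "moment_psd T y \<longleftrightarrow>
     (\<forall>x :: nat set \<Rightarrow> real. (\<Sum>I\<in>T. \<Sum>J\<in>T. x I * y (I \<union> J) * x J) \<ge> 0)"

text \<open>g * y for the affine function g(x) = b + sum_{j in V} a_j x_j.\<close>
definition shift_vec :: "nat set \<Rightarrow> real \<Rightarrow> (nat \<Rightarrow> real) \<Rightarrow> (nat set \<Rightarrow> real) \<Rightarrow> (nat set \<Rightarrow> real)" where
  "shift_vec V b a y = (\<lambda>I. b * y I + (\<Sum>j\<in>V. a j * y (I \<union> {j})))"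

text \<open>t-th Sherali-Adams lift of the knapsack LP relaxation
  K = {x in [0,1]^n : C - sum_i c_i x_i >= 0}. Vectors y are elements of [0,1]^{P_t(V)},
  represented as functions that vanish outside P_t(V).\<close>
definition SA_knapsack :: "nat \<Rightarrow> nat \<Rightarrow> (nat \<Rightarrow> real) \<Rightarrow> real \<Rightarrow> (nat set \<Rightarrow> real) set" where
  "SA_knapsack t n c C =
    {y. (\<forall>I. I \<notin> subsets_upto t (objs n) \<longrightarrow> y I = 0)
      \<and> (\<forall>I\<in>subsets_upto t (objs n). 0 \<le> y I \<and> y I \<le> 1)
      \<and> y {} = 1
      \<and> (\<forall>U. U \<subseteq> objs n \<and> card U \<le> t \<longrightarrow> moment_psd (Pow U) y)
      \<and> (\<forall>W. W \<subseteq> objs n \<and> card W + 1 \<le> t \<longrightarrow>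
             moment_psd (Pow W) (shift_vec (objs n) C (\<lambda>j. - c j) y))}"

definition knap_OPT :: "nat \<Rightarrow> (nat \<Rightarrow> real) \<Rightarrow> (nat \<Rightarrow> real) \<Rightarrow> real \<Rightarrow> real" where
  "knap_OPT n c v C =
     Max ((\<lambda>X. \<Sum>i\<in>X. v i) ` {X. X \<subseteq> objs n \<and> (\<Sum>i\<in>X. c i) \<le> C})"

end

theory Submission
  imports Defs
begin

(* Take the uniform instance c_i = v_i = 1 with capacity C = 2 - e/2 (e = min eps 1),
   so OPT = 1, and the fractional point that puts mass p = (2 - e)/((1 + delta) n) on
   every singleton: y_{} = 1, y_{i} = p, and y_I = 0 for |I| >= 2.  Its objective value
   is n p = (2 - e)/(1 + delta).
   A vector f supported on the empty set and singletons has the Gram decomposition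
     f(I u J) = (f{} - sum_i f{i}) [I = {}][J = {}] + sum_i f{i} [I <= {i}][J <= {i}],
   so its moment matrix on Pow U is PSD once f{i} >= 0 and f{} >= sum_{i in U} f{i}.
   Both y and g*y (for the capacity constraint g) are of this form, so membership of y
   in SA^t(K) reduces to two scalar inequalities in p, C, n and t, which the choice of
   parameters satisfies because t <= delta n. *)

lemma moment_psd_gram:
  fixes f :: "nat set \<Rightarrow> real" and w :: "'k \<Rightarrow> real" and u :: "'k \<Rightarrow> nat set \<Rightarrow> real"
  assumes w_nonneg: "\<And>k. k \<in> Ks \<Longrightarrow> 0 \<le> w k"
    and gram: "\<And>I J. I \<in> T \<Longrightarrow> J \<in> T \<Longrightarrow> f (I \<union> J) = (\<Sum>k\<in>Ks. w k * u k I * u k J)"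
  shows "moment_psd T f"
  unfolding moment_psd_def
proof
  fix x :: "nat set \<Rightarrow> real"
  have "(\<Sum>I\<in>T. \<Sum>J\<in>T. x I * f (I \<union> J) * x J)
      = (\<Sum>I\<in>T. \<Sum>J\<in>T. \<Sum>k\<in>Ks. w k * ((x I * u k I) * (x J * u k J)))"
    by (intro sum.cong refl) (simp add: gram sum_distrib_left sum_distrib_right algebra_simps)
  also have "\<dots> = (\<Sum>k\<in>Ks. w k * (\<Sum>I\<in>T. x I * u k I)\<^sup>2)"
    by (simp add: sum.swap[of _ T] sum.swap[of _ Ks] sum_distrib_left[symmetric]
        power2_eq_square sum_product)
  also have "\<dots> \<ge> 0"
    using w_nonneg by (intro sum_nonneg mult_nonneg_nonneg) auto
  finally show "(\<Sum>I\<in>T. \<Sum>J\<in>T. x I * f (I \<union> J) * x J) \<ge> 0" .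
qed

lemma singleton_supported_psd:
  fixes f :: "nat set \<Rightarrow> real"
  assumes fin: "finite U"
    and nonneg: "\<And>i. i \<in> U \<Longrightarrow> 0 \<le> f {i}"
    and dominated: "(\<Sum>i\<in>U. f {i}) \<le> f {}"
    and support: "\<And>K. K \<subseteq> U \<Longrightarrow> K \<noteq> {} \<Longrightarrow> (\<forall>i. K \<noteq> {i}) \<Longrightarrow> f K = 0"
  shows "moment_psd (Pow U) f"
proof -
  define w where "w = (\<lambda>k. case k of None \<Rightarrow> f {} - (\<Sum>i\<in>U. f {i}) | Some i \<Rightarrow> f {i})"
  define u where "u = (\<lambda>k (I::nat set). case k of
      None \<Rightarrow> if I = {} then 1 else 0
    | Some i \<Rightarrow> if I \<subseteq> {i} then (1::real) else 0)"
  have u_union: "u k (I \<union> J) = u k I * u k J" for k I J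
    by (cases k) (auto simp: u_def)
  have decomp: "f K = (\<Sum>k\<in>insert None (Some ` U). w k * u k K)" if "K \<subseteq> U" for K
  proof -
    have "(\<Sum>k\<in>insert None (Some ` U). w k * u k K)
        = w None * u None K + (\<Sum>i\<in>U. f {i} * (if K \<subseteq> {i} then 1 else 0))"
      using fin by (simp add: sum.reindex w_def u_def)
    also have "\<dots> = f K"
    proof (cases "K = {}")
      case False
      then consider (single) k where "K = {k}" | (large) "\<forall>i. K \<noteq> {i}" by blast
      then show ?thesis
      proof cases
        case single
        with that have "k \<in> U" by auto
        have "(\<Sum>i\<in>U. f {i} * (if K \<subseteq> {i} then 1 else 0)) = (\<Sum>i\<in>U. if i = k then f {i} else 0)"
          by (intro sum.cong) (auto simp: single)
        with \<open>k \<in> U\<close> fin show ?thesis by (simp add: single u_def)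
      next
        case large
        with \<open>K \<noteq> {}\<close> have "\<not> K \<subseteq> {i}" for i by (auto simp: subset_singleton_iff)
        with large \<open>K \<noteq> {}\<close> support[OF that] show ?thesis by (simp add: u_def)
      qed
    qed (simp add: w_def u_def)
    finally show ?thesis by simp
  qed
  show ?thesis
  proof (rule moment_psd_gram)
    show "0 \<le> w k" if "k \<in> insert None (Some ` U)" for k
      using that nonneg dominated by (auto simp: w_def)
    show "f (I \<union> J) = (\<Sum>k\<in>insert None (Some ` U). w k * u k I * u k J)"
      if "I \<in> Pow U" "J \<in> Pow U" for I J
      using decomp[of "I \<union> J"] that by (simp add: u_union mult.assoc)
  qed
qed

definition singleton_point :: "nat set \<Rightarrow> (nat \<Rightarrow> real) \<Rightarrow> nat set \<Rightarrow> real" where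
  "singleton_point V q I = (if I = {} then 1 else if \<exists>i\<in>V. I = {i} then q (the_elem I) else 0)"

lemma singleton_point_empty [simp]: "singleton_point V q {} = 1"
  by (simp add: singleton_point_def)

lemma singleton_point_single [simp]: "i \<in> V \<Longrightarrow> singleton_point V q {i} = q i"
  by (auto simp: singleton_point_def)

lemma singleton_point_large:
  "(\<forall>i. K \<noteq> {i}) \<Longrightarrow> K \<noteq> {} \<Longrightarrow> singleton_point V q K = 0"
  by (auto simp: singleton_point_def)

lemma shift_singleton_point:
  assumes "finite V"
  shows "shift_vec V b a (singleton_point V q) {} = b + (\<Sum>j\<in>V. a j * q j)"
    and "i \<in> V \<Longrightarrow> shift_vec V b a (singleton_point V q) {i} = (b + a i) * q i"
    and "K \<noteq> {} \<Longrightarrow> (\<forall>i. K \<noteq> {i}) \<Longrightarrow> shift_vec V b a (singleton_point V q) K = 0"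
proof -
  show "shift_vec V b a (singleton_point V q) {} = b + (\<Sum>j\<in>V. a j * q j)"
    by (simp add: shift_vec_def)
next
  assume i: "i \<in> V"
  have "(\<Sum>j\<in>V. a j * singleton_point V q ({i} \<union> {j})) = (\<Sum>j\<in>V. if j = i then a i * q i else 0)"
    by (intro sum.cong) (auto simp: singleton_point_def i doubleton_eq_iff)
  with i assms show "shift_vec V b a (singleton_point V q) {i} = (b + a i) * q i"
    by (simp add: shift_vec_def algebra_simps)
next
  assume K: "K \<noteq> {}" "\<forall>i. K \<noteq> {i}"
  have "\<forall>i. K \<union> {j} \<noteq> {i}" for j
    using K by (metis Un_empty_left insert_is_Un subset_singleton_iff sup.cobounded1)
  with K show "shift_vec V b a (singleton_point V q) K = 0"
    by (simp add: shift_vec_def singleton_point_large)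
qed

text \<open>Membership in the Sherali-Adams lift of the uniform knapsack instance: the moment
  conditions on \<open>Pow U\<close> need \<open>|U| p \<le> 1\<close> with \<open>|U| \<le> min t n\<close>, the constraint conditions on
  \<open>Pow W\<close> need \<open>|W| (C - 1) p \<le> C - n p\<close> with \<open>|W| \<le> t - 1\<close>.\<close>

lemma uniform_singleton_point_in_SA:
  fixes p C :: real
  assumes "1 \<le> t" "0 \<le> p" "p \<le> 1" "1 \<le> C"
    and moments: "real (min t n) * p \<le> 1"
    and capacity: "real (t - 1) * ((C - 1) * p) + real n * p \<le> C"
  shows "singleton_point (objs n) (\<lambda>_. p) \<in> SA_knapsack t n (\<lambda>_. 1) C"
proof -
  let ?y = "singleton_point (objs n) (\<lambda>_. p)"
  have fin: "finite (objs n)" and card_objs: "card (objs n) = n"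
    by (simp_all add: objs_def)
  have finite_sub: "finite U" "card U \<le> n" if "U \<subseteq> objs n" for U
    using that fin card_mono[OF fin] card_objs finite_subset by auto
  have outside: "?y I = 0" if "I \<notin> subsets_upto t (objs n)" for I
  proof -
    have "I \<noteq> {}" and "\<forall>i\<in>objs n. I \<noteq> {i}"
      using that \<open>1 \<le> t\<close> by (auto simp: subsets_upto_def)
    then show ?thesis by (auto simp: singleton_point_def)
  qed
  have moment: "moment_psd (Pow U) ?y" if U: "U \<subseteq> objs n" "card U \<le> t" for U
  proof (rule singleton_supported_psd)
    have "(\<Sum>i\<in>U. ?y {i}) = real (card U) * p"
      using U by (simp add: subset_iff)
    also have "\<dots> \<le> real (min t n) * p"
      using U finite_sub[OF U(1)] \<open>0 \<le> p\<close> by (intro mult_right_mono) auto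
    finally show "(\<Sum>i\<in>U. ?y {i}) \<le> ?y {}" using moments by simp
  qed (use U finite_sub \<open>0 \<le> p\<close> singleton_point_large in auto)
  have constraint: "moment_psd (Pow W) (shift_vec (objs n) C (\<lambda>_. - 1) ?y)"
    if W: "W \<subseteq> objs n" "card W + 1 \<le> t" for W
  proof (rule singleton_supported_psd)
    have "(\<Sum>i\<in>W. shift_vec (objs n) C (\<lambda>_. - 1) ?y {i}) = real (card W) * ((C - 1) * p)"
      using W shift_singleton_point(2)[OF fin] by (simp add: subset_iff)
    also have "\<dots> \<le> real (t - 1) * ((C - 1) * p)"
      using W \<open>0 \<le> p\<close> \<open>1 \<le> C\<close> by (intro mult_right_mono) auto
    also have "\<dots> \<le> C - real n * p" using capacity by simp
    finally show "(\<Sum>i\<in>W. shift_vec (objs n) C (\<lambda>_. - 1) ?y {i})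
        \<le> shift_vec (objs n) C (\<lambda>_. - 1) ?y {}"
      using shift_singleton_point(1)[OF fin] card_objs by (simp add: sum_negf)
  qed (use W finite_sub \<open>0 \<le> p\<close> \<open>1 \<le> C\<close> shift_singleton_point[OF fin] in auto)
  have bounded: "0 \<le> ?y I \<and> ?y I \<le> 1" for I
    using \<open>0 \<le> p\<close> \<open>p \<le> 1\<close> by (simp add: singleton_point_def)
  show ?thesis
    unfolding SA_knapsack_def using outside bounded moment constraint by simp
qed

lemma gap_parameters:
  fixes e \<delta> :: real and n t :: nat
  assumes e: "0 < e" "e \<le> 1" and \<delta>: "0 < \<delta>" and "0 < n" and t: "real t \<le> \<delta> * real n"
  defines "p \<equiv> (2 - e) / (1 + \<delta>) / real n" and "C \<equiv> 2 - e / 2"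
  shows "real (min t n) * p \<le> 1"
    and "real (t - 1) * ((C - 1) * p) + real n * p \<le> C"
proof -
  define s where "s = (2 - e) / (1 + \<delta>)"
  have n: "real n > 0" using \<open>0 < n\<close> by simp
  have s: "0 \<le> s" "s * (1 + \<delta>) = 2 - e" using e \<delta> by (simp_all add: s_def)
  have np: "real n * p = s" using n by (simp add: p_def s_def)
  have "real (min t n) * (2 - e) \<le> real (min t n) * 2"
    using e by (intro mult_left_mono) auto
  also have "\<dots> \<le> real n * (1 + \<delta>)"
    using t by (simp add: algebra_simps)
  finally have bound: "real (min t n) * (2 - e) \<le> real n * (1 + \<delta>)" .
  have "real (min t n) * p = real (min t n) * (2 - e) / (real n * (1 + \<delta>))"
    by (simp add: p_def mult.commute)
  also have "\<dots> \<le> 1"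
    using bound n \<delta> by (simp add: pos_divide_le_eq)
  finally show "real (min t n) * p \<le> 1" .
  have "real (t - 1) * p \<le> \<delta> * real n * p"
    using t s n by (intro mult_right_mono) (auto simp: p_def s_def[symmetric])
  then have "real (t - 1) * ((C - 1) * p) \<le> (1 - e / 2) * (\<delta> * s)"
    using e np by (simp add: C_def mult.assoc mult.left_commute mult_left_mono)
  moreover have "(1 - e / 2) * (\<delta> * s) + s \<le> C"
  proof -
    have "(2 - e / 2) * (1 + \<delta>) - (2 - e) * ((1 - e / 2) * \<delta> + 1) = e / 2 + \<delta> * e * (3 - e) / 2"
      by (simp add: field_simps)
    moreover have "0 \<le> \<delta> * e * (3 - e)" using e \<delta> by simp
    ultimately have "(2 - e) * ((1 - e / 2) * \<delta> + 1) \<le> (2 - e / 2) * (1 + \<delta>)"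
      using e by linarith
    moreover have "((1 - e / 2) * (\<delta> * s) + s) * (1 + \<delta>) = ((1 - e / 2) * \<delta> + 1) * (s * (1 + \<delta>))"
      by (simp add: algebra_simps)
    ultimately have "((1 - e / 2) * (\<delta> * s) + s) * (1 + \<delta>) \<le> C * (1 + \<delta>)"
      using s(2) by (simp add: C_def mult.commute)
    then show ?thesis using \<delta> by (simp add: mult_le_cancel_right)
  qed
  ultimately show "real (t - 1) * ((C - 1) * p) + real n * p \<le> C" using np by linarith
qed

text \<open>With unit sizes and values and capacity in \<open>[1, 2)\<close>, exactly one object fits.\<close>

lemma uniform_knapsack_OPT:
  assumes "1 \<le> C" "C < 2" "1 \<le> n"
  shows "knap_OPT n (\<lambda>_. 1) (\<lambda>_. 1) C = 1"
  unfolding knap_OPT_def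
proof (rule Max_eqI)
  show "finite ((\<lambda>X. \<Sum>i\<in>X. (1::real)) ` {X. X \<subseteq> objs n \<and> (\<Sum>i\<in>X. (1::real)) \<le> C})"
    by (rule finite_imageI, rule finite_subset[of _ "Pow (objs n)"]) (auto simp: objs_def)
  show "1 \<in> (\<lambda>X. \<Sum>i\<in>X. (1::real)) ` {X. X \<subseteq> objs n \<and> (\<Sum>i\<in>X. (1::real)) \<le> C}"
    using assms by (intro image_eqI[of _ _ "{1}"]) (auto simp: objs_def)
  fix r assume "r \<in> (\<lambda>X. \<Sum>i\<in>X. (1::real)) ` {X. X \<subseteq> objs n \<and> (\<Sum>i\<in>X. (1::real)) \<le> C}"
  then obtain X :: "nat set" where r: "r = real (card X)" "real (card X) \<le> C" by auto
  with assms have "card X < 2" by linarith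
  with r show "r \<le> 1" by simp
qed

theorem mainTheorem1:
  fixes \<epsilon> \<delta> :: real and n t :: nat
  assumes "\<epsilon> > 0" and "\<delta> > 0" and "n \<ge> 2" and "1 \<le> t" and "real t \<le> \<delta> * real n"
  shows "\<exists>C::real. 1 \<le> C \<and> C < 2 \<and>
           (let c = (\<lambda>_::nat. 1::real); v = (\<lambda>_::nat. 1::real) in
            \<exists>y \<in> SA_knapsack t n c C.
              (\<Sum>i\<in>objs n. v i * y {i}) \<ge> (2 - \<epsilon>) / (1 + \<delta>) * knap_OPT n c v C)"
proof -
  define e where "e = min \<epsilon> 1"
  define p where "p = (2 - e) / (1 + \<delta>) / real n"
  define C where "C = 2 - e / 2"
  have e: "0 < e" "e \<le> 1" "e \<le> \<epsilon>" using assms by (auto simp: e_def)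
  have C: "1 \<le> C" "C < 2" using e by (auto simp: C_def)
  have p: "0 \<le> p" "p \<le> 1" "real n * p = (2 - e) / (1 + \<delta>)"
    using e assms by (auto simp: p_def field_simps)
  note params = gap_parameters[of e \<delta> n t, folded p_def C_def]
  have in_SA: "singleton_point (objs n) (\<lambda>_. p) \<in> SA_knapsack t n (\<lambda>_. 1) C"
    using uniform_singleton_point_in_SA[OF \<open>1 \<le> t\<close> p(1,2) C(1)] params e assms by simp
  have objective: "(\<Sum>i\<in>objs n. 1 * singleton_point (objs n) (\<lambda>_. p) {i}) = (2 - e) / (1 + \<delta>)"
    using p(3) by (simp add: objs_def)
  have bound: "(2 - \<epsilon>) / (1 + \<delta>) * knap_OPT n (\<lambda>_. 1) (\<lambda>_. 1) C \<le> (2 - e) / (1 + \<delta>)"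
    using uniform_knapsack_OPT[OF C] e assms by (simp add: divide_right_mono)
  show ?thesis
    unfolding Let_def
    using C in_SA objective bound
    by (intro exI[of _ C] conjI bexI[of _ "singleton_point (objs n) (\<lambda>_. p)"]) auto
qed

end
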